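(* Let $l\le n$ be positive integers and let $\mathbb F\subseteq\mathbb D_1^n$ be an index set of local height $l$. If $|\mathbb F|<2^l-1$, then there exists an index $(k,j)\in\mathbb D_1^n\setminus\mathbb F$ such that $\mathrm{lh}(\mathbb F\cup\{(k,j)\})=l$.
   Context: Dyadic intervals: $\Delta_k^{(j)}:=[\frac{j-1}{2^k},\frac{j}{2^k})$ for $k\ge0$. Dyadic tree $\mathbb D:=\{(k,j):k\ge1;\ j=1,\dots,2^{k-1}\}$; $\mathbb D_1^n:=\{(k,j):k=1,\dots,n;\ j=1,\dots,2^{k-1}\}$. Branches: $\mathbb B(t):=\{(k,j)\in\mathbb D:t\in\Delta_{k-1}^{(j)}\}$ for $t\in[0,1)$; local height of a finite $\mathbb F\subseteq\mathbb D$: $\mathrm{lh}(\mathbb F):=\max_{t\in[0,1)}|\mathbb F\cap\mathbb B(t)|$. *)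

theory Defs
  imports Complex_Main
begin

definition dyadic_interval :: "nat \<Rightarrow> nat \<Rightarrow> real set" where
  "dyadic_interval k j = {(real j - 1) / 2 ^ k ..< real j / 2 ^ k}"

definition dyadic_tree_upto :: "nat \<Rightarrow> (nat \<times> nat) set" where
  "dyadic_tree_upto n = {(k, j). 1 \<le> k \<and> k \<le> n \<and> 1 \<le> j \<and> j \<le> 2 ^ (k - 1)}"

definition dyadic_tree :: "(nat \<times> nat) set" where
  "dyadic_tree = {(k, j). 1 \<le> k \<and> 1 \<le> j \<and> j \<le> 2 ^ (k - 1)}"

definition branch :: "real \<Rightarrow> (nat \<times> nat) set" where
  "branch t = {(k, j). (k, j) \<in> dyadic_tree \<and> t \<in> dyadic_interval (k - 1) j}"

definition local_height :: "(nat \<times> nat) set \<Rightarrow> nat" where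
  "local_height F = Max ((\<lambda>t. card (F \<inter> branch t)) ` {0..<1})"

end

(*
  Address the node (k, j) of the dyadic tree by the k - 1 binary digits of j - 1. Then
  D_1^n becomes the set of words of length < n, and every branch B(t) becomes the set of
  prefixes of the first n binary digits of t. If no node could be added to F without raising
  its local height l, every word outside F would lie on a root-to-leaf path carrying l words
  of F. Such a set has at least 2^l - 1 elements, by induction on the depth: if the root
  belongs to it, both subtrees inherit the property for l - 1; otherwise the path through
  the root shows that l is less than the depth, and each subtree inherits the property for l.
*)
theory Submission
  imports Defs "HOL-Library.Sublist"
begin

definition path_nodes :: "nat \<Rightarrow> 'a list \<Rightarrow> 'a list set" where
  "path_nodes d p = {w. length w < d \<and> prefix w p}"

definition subtree :: "'a list set \<Rightarrow> 'a \<Rightarrow> 'a list set" where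
  "subtree G b = {w. b # w \<in> G}"

definition saturated :: "nat \<Rightarrow> nat \<Rightarrow> bool list set \<Rightarrow> bool" where
  "saturated d h G \<longleftrightarrow>
     (\<forall>w. length w < d \<and> w \<notin> G \<longrightarrow> (\<exists>p. w \<in> path_nodes d p \<and> h \<le> card (G \<inter> path_nodes d p)))"

lemma finite_words_shorter: "finite {w :: bool list. length w < d}"
proof -
  have "{w :: bool list. length w < d} \<subseteq> {w. set w \<subseteq> UNIV \<and> length w \<le> d}"
    by auto
  then show ?thesis
    using finite_lists_length_le[of "UNIV :: bool set" d] finite_subset by auto
qed

lemma path_nodes_Cons:
  "w \<in> path_nodes (Suc d) (b # q) \<longleftrightarrow> w = [] \<or> (\<exists>w'. w = b # w' \<and> w' \<in> path_nodes d q)"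
  by (auto simp: path_nodes_def prefix_Cons)

lemma finite_path_nodes: "finite (path_nodes d p)"
proof -
  have "path_nodes d p \<subseteq> set (prefixes p)"
    by (auto simp: path_nodes_def)
  then show ?thesis using finite_subset by blast
qed

lemma card_path_nodes_le: "card (path_nodes d p) \<le> d"
proof -
  have "inj_on length (path_nodes d p)"
    by (rule inj_onI) (simp add: path_nodes_def, metis prefix_length_prefix prefix_order.antisym order_refl)
  then have "card (path_nodes d p) \<le> card {..<d}"
    by (rule card_inj_on_le) (auto simp: path_nodes_def)
  then show ?thesis by simp
qed

lemma finite_subtree: "finite G \<Longrightarrow> finite (subtree G b)"
  using finite_vimageI[of G "Cons b"] by (simp add: subtree_def vimage_def)

lemma card_Int_path_nodes_Cons:
  assumes "finite G"
  shows "card (G \<inter> path_nodes (Suc d) (b # q)) = card (G \<inter> {[]}) + card (subtree G b \<inter> path_nodes d q)"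
proof -
  have "G \<inter> path_nodes (Suc d) (b # q) = (G \<inter> {[]}) \<union> Cons b ` (subtree G b \<inter> path_nodes d q)"
    by (auto simp: subtree_def path_nodes_Cons)
  moreover have "card ((G \<inter> {[]}) \<union> Cons b ` (subtree G b \<inter> path_nodes d q))
      = card (G \<inter> {[]}) + card (subtree G b \<inter> path_nodes d q)"
    using finite_subtree[OF assms] by (subst card_Un_disjoint) (auto simp: card_image)
  ultimately show ?thesis by simp
qed

lemma card_root_subtrees:
  assumes "finite G"
  shows "card G = card (G \<inter> {[]}) + card (subtree G True) + card (subtree G False)"
proof -
  have "G = (G \<inter> {[]}) \<union> (Cons True ` subtree G True \<union> Cons False ` subtree G False)"
  proof (intro equalityI subsetI)
    fix w assume "w \<in> G"
    show "w \<in> (G \<inter> {[]}) \<union> (Cons True ` subtree G True \<union> Cons False ` subtree G False)"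
    proof (cases w)
      case (Cons b v)
      with \<open>w \<in> G\<close> show ?thesis by (cases b) (auto simp: subtree_def)
    qed (use \<open>w \<in> G\<close> in simp)
  qed (auto simp: subtree_def)
  also have "card \<dots> = card (G \<inter> {[]}) + card (subtree G True) + card (subtree G False)"
    using finite_subtree[OF assms] by (subst card_Un_disjoint; (subst card_Un_disjoint)?) (auto simp: card_image)
  finally show ?thesis .
qed

lemma saturated_subtree:
  assumes "finite G" and "saturated (Suc d) h G"
  shows "saturated d (h - card (G \<inter> {[]})) (subtree G b)"
  unfolding saturated_def
proof (intro allI impI)
  fix w assume "length w < d \<and> w \<notin> subtree G b"
  then have "length (b # w) < Suc d" "b # w \<notin> G"
    by (auto simp: subtree_def)
  then obtain p where p: "b # w \<in> path_nodes (Suc d) p" "h \<le> card (G \<inter> path_nodes (Suc d) p)"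
    using assms(2) unfolding saturated_def by blast
  then obtain q where "p = b # q"
    by (cases p) (auto simp: path_nodes_def)
  with p show "\<exists>q. w \<in> path_nodes d q \<and> h - card (G \<inter> {[]}) \<le> card (subtree G b \<inter> path_nodes d q)"
    by (auto simp: path_nodes_Cons card_Int_path_nodes_Cons[OF assms(1)])
qed

lemma saturated_le_depth:
  assumes "saturated (Suc d) h G" and "[] \<notin> G"
  shows "h \<le> d"
proof -
  obtain p where p: "[] \<in> path_nodes (Suc d) p" "h \<le> card (G \<inter> path_nodes (Suc d) p)"
    using assms unfolding saturated_def by (metis list.size(3) zero_less_Suc)
  have "card (G \<inter> path_nodes (Suc d) p) \<le> card (path_nodes (Suc d) p - {[]})"
    by (rule card_mono) (use assms(2) finite_path_nodes in auto)
  also have "\<dots> = card (path_nodes (Suc d) p) - 1"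
    using p(1) finite_path_nodes by (simp add: card_Diff_singleton)
  also have "\<dots> \<le> d"
    using card_path_nodes_le[of "Suc d" p] by simp
  finally show ?thesis
    using p(2) by linarith
qed

lemma saturated_two_pow_le_card:
  assumes "G \<subseteq> {w. length w < d}" and "h \<le> d" and "saturated d h G"
  shows "2 ^ h - 1 \<le> card G"
  using assms
proof (induction d arbitrary: G h)
  case 0
  then show ?case by simp
next
  case (Suc d)
  have fin: "finite G"
    using Suc.prems(1) finite_words_shorter finite_subset by blast
  have sub: "subtree G b \<subseteq> {w. length w < d}" for b
    using Suc.prems(1) by (auto simp: subtree_def)
  have sat: "saturated d (h - card (G \<inter> {[]})) (subtree G b)" for b
    using saturated_subtree[OF fin Suc.prems(3)] .
  consider "h = 0" | "h > 0" "[] \<in> G" | "[] \<notin> G"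
    by blast
  then show ?case
  proof cases
    case 1
    then show ?thesis by simp
  next
    case 2
    then have root: "card (G \<inter> {[]}) = 1" by simp
    have IH: "2 ^ (h - 1) - 1 \<le> card (subtree G b)" for b
      using Suc.IH[OF sub _ sat] Suc.prems(2) root by simp
    have "(2::nat) ^ h = 2 * 2 ^ (h - 1)" "1 \<le> (2::nat) ^ (h - 1)"
      using \<open>h > 0\<close> by (cases h; simp)+
    then show ?thesis
      using IH[of True] IH[of False] card_root_subtrees[OF fin] root by linarith
  next
    case 3
    then have "2 ^ h - 1 \<le> card (subtree G True)"
      using Suc.IH[OF sub _ sat] saturated_le_depth[OF Suc.prems(3)] by simp
    then show ?thesis
      using card_root_subtrees[OF fin] by linarith
  qed
qed

fun bits :: "nat \<Rightarrow> nat \<Rightarrow> bool list" where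
  "bits 0 a = []"
| "bits (Suc m) a = bits m (a div 2) @ [odd a]"

definition bits_value :: "bool list \<Rightarrow> nat" where
  "bits_value w = foldl (\<lambda>a b. 2 * a + of_bool b) 0 w"

lemma length_bits [simp]: "length (bits m a) = m"
  by (induction m arbitrary: a) auto

lemma bits_value_snoc [simp]: "bits_value (w @ [b]) = 2 * bits_value w + of_bool b"
  by (simp add: bits_value_def)

lemma bits_value_less: "bits_value w < 2 ^ length w"
  by (induction w rule: rev_induct) (auto simp: bits_value_def)

lemma bits_bits_value: "bits (length w) (bits_value w) = w"
proof (induction w rule: rev_induct)
  case Nil
  then show ?case by simp
next
  case (snoc b w)
  have "(2 * bits_value w + of_bool b) div 2 = bits_value w" "odd (2 * bits_value w + of_bool b) = b"
    by (cases b; simp)+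
  with snoc show ?case by simp
qed

lemma bits_value_bits: "a < 2 ^ m \<Longrightarrow> bits_value (bits m a) = a"
proof (induction m arbitrary: a)
  case 0
  then show ?case by (simp add: bits_value_def)
next
  case (Suc m)
  then have "bits_value (bits m (a div 2)) = a div 2" by simp
  then show ?case by simp
qed

lemma prefix_bits: "i \<le> m \<Longrightarrow> prefix (bits i (a div 2 ^ (m - i))) (bits m a)"
proof (induction m arbitrary: a)
  case 0
  then show ?case by simp
next
  case (Suc m)
  show ?case
  proof (cases "i = Suc m")
    case False
    then have "prefix (bits i (a div 2 div 2 ^ (m - i))) (bits m (a div 2))"
      using Suc by simp
    moreover have "a div 2 div 2 ^ (m - i) = a div 2 ^ (Suc m - i)"
      using False Suc.prems by (simp add: div_mult2_eq Suc_diff_le)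
    ultimately show ?thesis by simp
  qed simp
qed

text \<open>The children (k + 1, 2j - 1) and (k + 1, 2j) of (k, j) get the addresses
  \<open>node_word (k, j) @ [False]\<close> and \<open>node_word (k, j) @ [True]\<close>.\<close>

definition node_word :: "nat \<times> nat \<Rightarrow> bool list" where
  "node_word = (\<lambda>(k, j). bits (k - 1) (j - 1))"

definition word_node :: "bool list \<Rightarrow> nat \<times> nat" where
  "word_node w = (Suc (length w), Suc (bits_value w))"

lemma finite_dyadic_tree_upto: "finite (dyadic_tree_upto n)"
proof -
  have "dyadic_tree_upto n \<subseteq> {..n} \<times> {..2 ^ n}"
    by (auto simp: dyadic_tree_upto_def intro: order_trans[OF _ power_increasing[of _ n "2::nat"]])
  then show ?thesis using finite_subset by blast
qed

lemma length_node_word: "v \<in> dyadic_tree_upto n \<Longrightarrow> length (node_word v) < n"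
  by (auto simp: node_word_def dyadic_tree_upto_def)

lemma word_node_node_word: "v \<in> dyadic_tree_upto n \<Longrightarrow> word_node (node_word v) = v"
  by (auto simp: node_word_def word_node_def dyadic_tree_upto_def bits_value_bits)

lemma node_word_word_node: "node_word (word_node w) = w"
  by (simp add: node_word_def word_node_def bits_bits_value)

lemma word_node_in_dyadic_tree_upto: "length w < n \<Longrightarrow> word_node w \<in> dyadic_tree_upto n"
  using bits_value_less[of w] by (auto simp: word_node_def dyadic_tree_upto_def)

lemma inj_on_node_word: "inj_on node_word (dyadic_tree_upto n)"
  by (rule inj_on_inverseI[where g = word_node]) (rule word_node_node_word)

lemma dyadic_interval_index:
  assumes "t \<in> dyadic_interval k j" and "1 \<le> j" and "k \<le> n"
  shows "j - 1 = nat \<lfloor>t * 2 ^ n\<rfloor> div 2 ^ (n - k)"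
proof -
  have lower: "real j - 1 \<le> t * 2 ^ k" and "t * 2 ^ k < real j"
    using assms(1) by (auto simp: dyadic_interval_def field_simps)
  then have "int (j - 1) = \<lfloor>t * 2 ^ k\<rfloor>"
    using assms(2) by (simp add: eq_commute[of _ "floor _"] floor_eq_iff of_nat_diff)
  also have "(2::real) ^ n = 2 ^ k * 2 ^ (n - k)"
    using assms(3) by (simp flip: power_add)
  then have "t * 2 ^ k = t * 2 ^ n / real_of_int (2 ^ (n - k))"
    by simp
  then have "\<lfloor>t * 2 ^ k\<rfloor> = \<lfloor>t * 2 ^ n / real_of_int (2 ^ (n - k))\<rfloor>"
    by (rule arg_cong)
  also have "\<dots> = \<lfloor>t * 2 ^ n\<rfloor> div 2 ^ (n - k)"
    by (rule floor_divide_real_eq_div) simp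
  finally have index: "int (j - 1) = \<lfloor>t * 2 ^ n\<rfloor> div 2 ^ (n - k)" .
  have "0 \<le> t * 2 ^ k"
    using lower assms(2) by simp
  then have "0 \<le> t"
    using divide_nonneg_pos[of "t * 2 ^ k" "2 ^ k"] by simp
  have "j - 1 = nat (\<lfloor>t * 2 ^ n\<rfloor> div 2 ^ (n - k))"
    using index by (metis nat_int)
  also have "\<dots> = nat \<lfloor>t * 2 ^ n\<rfloor> div 2 ^ (n - k)"
    using \<open>0 \<le> t\<close> by (simp add: nat_div_distrib nat_power_eq)
  finally show ?thesis .
qed

definition binary_digits :: "nat \<Rightarrow> real \<Rightarrow> bool list" where
  "binary_digits n t = bits n (nat \<lfloor>t * 2 ^ n\<rfloor>)"

lemma node_word_in_path_nodes:
  assumes "v \<in> dyadic_tree_upto n" and "v \<in> branch t"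
  shows "node_word v \<in> path_nodes n (binary_digits n t)"
proof -
  obtain k j where v: "v = (k, j)" and kj: "1 \<le> k" "k \<le> n" "1 \<le> j"
    using assms(1) by (auto simp: dyadic_tree_upto_def)
  have "t \<in> dyadic_interval (k - 1) j"
    using assms(2) v by (simp add: branch_def)
  then have "j - 1 = nat \<lfloor>t * 2 ^ n\<rfloor> div 2 ^ (n - (k - 1))"
    using kj by (intro dyadic_interval_index) auto
  then have "node_word v = bits (k - 1) (nat \<lfloor>t * 2 ^ n\<rfloor> div 2 ^ (n - (k - 1)))"
    using v by (simp add: node_word_def)
  then have "prefix (node_word v) (binary_digits n t)"
    using prefix_bits[of "k - 1" n] kj unfolding binary_digits_def by simp
  then show ?thesis
    using assms(1) length_node_word by (simp add: path_nodes_def)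
qed

lemma card_branch_le_card_path_nodes:
  assumes "F \<subseteq> dyadic_tree_upto n"
  shows "card (F \<inter> branch t) \<le> card (node_word ` F \<inter> path_nodes n (binary_digits n t))"
proof -
  have "card (F \<inter> branch t) = card (node_word ` (F \<inter> branch t))"
    using inj_on_subset[OF inj_on_node_word] assms by (metis card_image inf.coboundedI1)
  also have "\<dots> \<le> card (node_word ` F \<inter> path_nodes n (binary_digits n t))"
    using assms node_word_in_path_nodes by (intro card_mono finite_Int disjI2 finite_path_nodes) auto
  finally show ?thesis .
qed

lemma finite_local_height_values:
  assumes "finite F"
  shows "finite ((\<lambda>t. card (F \<inter> branch t)) ` A)"
proof (rule finite_subset)
  show "(\<lambda>t. card (F \<inter> branch t)) ` A \<subseteq> {..card F}"
    using card_mono[OF assms Int_lower1] by blast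
qed simp

lemma local_height_attained:
  assumes "finite F"
  shows "\<exists>t\<in>{0..<1}. card (F \<inter> branch t) = local_height F"
proof -
  have "local_height F \<in> (\<lambda>t. card (F \<inter> branch t)) ` {0..<1}"
    unfolding local_height_def by (rule Max_in[OF finite_local_height_values[OF assms]]) simp
  then show ?thesis by auto
qed

lemma card_branch_le_local_height:
  "finite F \<Longrightarrow> t \<in> {0..<1} \<Longrightarrow> card (F \<inter> branch t) \<le> local_height F"
  unfolding local_height_def by (rule Max_ge[OF finite_local_height_values]) auto

lemma local_height_insert_neq:
  assumes "finite F" and "v \<notin> F" and "local_height (insert v F) \<noteq> local_height F"
  shows "\<exists>t\<in>{0..<1}. v \<in> branch t \<and> local_height F \<le> card (F \<inter> branch t)"
proof -
  obtain s where s: "s \<in> {0..<1}" "card (F \<inter> branch s) = local_height F"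
    using local_height_attained[OF assms(1)] by blast
  have "card (F \<inter> branch s) \<le> card (insert v F \<inter> branch s)"
    using assms(1) by (intro card_mono) auto
  also have "\<dots> \<le> local_height (insert v F)"
    using assms(1) s(1) by (intro card_branch_le_local_height) auto
  finally have grows: "local_height F < local_height (insert v F)"
    using s(2) assms(3) by simp
  obtain t where t: "t \<in> {0..<1}" "card (insert v F \<inter> branch t) = local_height (insert v F)"
    using local_height_attained[of "insert v F"] assms(1) by blast
  have "v \<in> branch t"
  proof (rule ccontr)
    assume "v \<notin> branch t"
    then have "insert v F \<inter> branch t = F \<inter> branch t" by auto
    then show False
      using grows t card_branch_le_local_height[OF assms(1) t(1)] by simp
  qed
  then have "card (insert v F \<inter> branch t) = Suc (card (F \<inter> branch t))"
    using assms(1,2) by simp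
  then show ?thesis
    using \<open>v \<in> branch t\<close> t grows by auto
qed

lemma saturated_image_node_word:
  assumes "F \<subseteq> dyadic_tree_upto n"
    and keeps: "\<And>v. v \<in> dyadic_tree_upto n - F \<Longrightarrow> local_height (insert v F) \<noteq> local_height F"
  shows "saturated n (local_height F) (node_word ` F)"
  unfolding saturated_def
proof (intro allI impI)
  fix w assume w: "length w < n \<and> w \<notin> node_word ` F"
  have fin: "finite F"
    using assms(1) finite_dyadic_tree_upto finite_subset by blast
  have v: "word_node w \<in> dyadic_tree_upto n"
    using w by (simp add: word_node_in_dyadic_tree_upto)
  have "word_node w \<notin> F"
    using w by (metis image_eqI node_word_word_node)
  then obtain t where t: "word_node w \<in> branch t" "local_height F \<le> card (F \<inter> branch t)"
    using local_height_insert_neq[OF fin] keeps v by blast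
  have "w \<in> path_nodes n (binary_digits n t)"
    using node_word_in_path_nodes[OF v t(1)] by (simp add: node_word_word_node)
  then show "\<exists>p. w \<in> path_nodes n p \<and> local_height F \<le> card (node_word ` F \<inter> path_nodes n p)"
    using t(2) card_branch_le_card_path_nodes[OF assms(1)] order_trans by blast
qed

theorem lemma4p1:
  fixes l n :: nat and F :: "(nat \<times> nat) set"
  assumes "1 \<le> l" and "l \<le> n"
    and "F \<subseteq> dyadic_tree_upto n"
    and "local_height F = l"
    and "card F < 2 ^ l - 1"
  shows "\<exists>k j. (k, j) \<in> dyadic_tree_upto n - F \<and> local_height (F \<union> {(k, j)}) = l"
proof (rule ccontr)
  assume "\<not> ?thesis"
  then have "local_height (insert v F) \<noteq> local_height F" if "v \<in> dyadic_tree_upto n - F" for v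
    using that assms(4) by (cases v) auto
  then have "saturated n l (node_word ` F)"
    using saturated_image_node_word[OF assms(3)] assms(4) by simp
  moreover have "node_word ` F \<subseteq> {w. length w < n}"
    using assms(3) length_node_word by blast
  ultimately have "2 ^ l - 1 \<le> card (node_word ` F)"
    using saturated_two_pow_le_card assms(2) by blast
  also have "card (node_word ` F) = card F"
    using inj_on_subset[OF inj_on_node_word assms(3)] by (rule card_image)
  finally show False
    using assms(5) by simp
qed

end
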